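(* Let $\psi:\mathbb{R}^r\to\mathbb{R}$, let $S\subseteq\mathbb{R}^r$ be nonempty and closed, let $\bar z\in S$, and suppose $\psi$ is twice semidifferentiable at $\bar z$. (i) If $\bar z$ is a local minimizer of $\psi$ on $S$, then $\mathrm{d}\psi(\bar z)(w)\ge0$ for all $w\in T_S(\bar z)$, and for every $w\in T_S(\bar z)$ with $\mathrm{d}\psi(\bar z)(w)=0$, $$\mathrm{d}^2\psi(\bar z)(w)+\mathrm{d}^2\delta_S(\bar z;-\mathrm{d}\psi(\bar z))(w)\ge 0.$$ (ii) Suppose $\mathrm{d}\psi(\bar z)(w)\ge0$ for all $w\in T_S(\bar z)$ and that for every $w\in T_S(\bar z)\setminus\{0\}$ with $\mathrm{d}\psi(\bar z)(w)=0$, $$\mathrm{d}^2\psi(\bar z)(w)+\mathrm{d}^2\delta_S(\bar z;-\mathrm{d}\psi(\bar z))(w)>0.$$ Then there exist $\varepsilon>0$ and $\eta>0$ such that $\psi(z)\ge\psi(\bar z)+\varepsilon\|z-\bar z\|^2$ for all $z\in S\cap\mathbb{B}_\eta(\bar z)$; in particular $\bar z$ is a local minimizer of $\psi$ on $S$.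
   Context: $\mathbb{B}_\eta(z)$ is the closed Euclidean ball of radius $\eta$ centered at $z$. For $\psi:\mathbb{R}^r\to\mathbb{R}$ and $\bar z,w\in\mathbb{R}^r$: the subderivative is $\mathrm{d}\psi(\bar z)(w):=\liminf_{t\downarrow0,\,w'\to w}\frac{\psi(\bar z+tw')-\psi(\bar z)}{t}$; $\psi$ is semidifferentiable at $\bar z$ if for every $w$ the limit $\lim_{t\downarrow0,\,w'\to w}\frac{\psi(\bar z+tw')-\psi(\bar z)}{t}$ exists as a real number. The second subderivative is $\mathrm{d}^2\psi(\bar z)(w):=\liminf_{t\downarrow0,\,w'\to w}\frac{\psi(\bar z+tw')-\psi(\bar z)-t\,\mathrm{d}\psi(\bar z)(w')}{\frac12 t^2}$, and $\psi$ is twice semidifferentiable at $\bar z$ if it is semidifferentiable at $\bar z$ and for every $w$ this liminf is a limit and is a real number. $T_S(\bar z)$ is the tangent cone: $w\in T_S(\bar z)$ iff there are $t_k\downarrow0$, $w_k\to w$ with $\bar z+t_kw_k\in S$. For closed $S$, $\bar z\in S$ and $\varphi:\mathbb{R}^r\to\mathbb{R}$, define $\mathrm{d}^2\delta_S(\bar z;\varphi)(w):=\liminf_{t\downarrow0,\,w'\to w,\ \bar z+tw'\in S}\frac{-2\varphi(w')}{t}$ (equal to $+\infty$ if there are no such $t,w'$); thus $\mathrm{d}^2\delta_S(\bar z;-\mathrm{d}\psi(\bar z))(w)=\liminf_{t\downarrow0,\,w'\to w,\ \bar z+tw'\in S}\frac{2\,\mathrm{d}\psi(\bar z)(w')}{t}$.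 *)

theory Defs
  imports "HOL-Analysis.Analysis"
begin

definition tw_filter :: "'a::real_normed_vector \<Rightarrow> (real \<times> 'a) filter" where
  "tw_filter w = at_right 0 \<times>\<^sub>F nhds w"

definition subderiv :: "('a::real_normed_vector \<Rightarrow> real) \<Rightarrow> 'a \<Rightarrow> 'a \<Rightarrow> ereal" where
  "subderiv psi z w =
     Liminf (tw_filter w) (\<lambda>(t, w'). ereal ((psi (z + t *\<^sub>R w') - psi z) / t))"

definition semidifferentiable_at :: "('a::real_normed_vector \<Rightarrow> real) \<Rightarrow> 'a \<Rightarrow> bool" where
  "semidifferentiable_at psi z \<longleftrightarrow>
     (\<forall>w. \<exists>L::real. ((\<lambda>(t, w'). (psi (z + t *\<^sub>R w') - psi z) / t) \<longlongrightarrow> L) (tw_filter w))"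

definition second_quot :: "('a::real_normed_vector \<Rightarrow> real) \<Rightarrow> 'a \<Rightarrow> real \<times> 'a \<Rightarrow> ereal" where
  "second_quot psi z = (\<lambda>(t, w').
     (ereal (psi (z + t *\<^sub>R w') - psi z) - ereal t * subderiv psi z w') * ereal (2 / t\<^sup>2))"

definition second_subderiv :: "('a::real_normed_vector \<Rightarrow> real) \<Rightarrow> 'a \<Rightarrow> 'a \<Rightarrow> ereal" where
  "second_subderiv psi z w = Liminf (tw_filter w) (second_quot psi z)"

definition twice_semidifferentiable_at :: "('a::real_normed_vector \<Rightarrow> real) \<Rightarrow> 'a \<Rightarrow> bool" where
  "twice_semidifferentiable_at psi z \<longleftrightarrow> semidifferentiable_at psi z \<and>
     (\<forall>w. \<exists>L::real. (second_quot psi z \<longlongrightarrow> ereal L) (tw_filter w))"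

definition tangent_cone :: "'a::real_normed_vector set \<Rightarrow> 'a \<Rightarrow> 'a set" where
  "tangent_cone S z = {w. \<exists>t wk. (\<forall>k. t k > 0) \<and> t \<longlonglongrightarrow> 0 \<and> wk \<longlonglongrightarrow> w \<and>
                              (\<forall>k. z + t k *\<^sub>R wk k \<in> S)}"

text \<open>d^2 delta_S(z; phi)(w): liminf over t -> 0+, w' -> w with z + t w' in S of -2 phi(w')/t;
  the liminf over the trivial filter (no such points) is +infinity.\<close>
definition second_subderiv_indicator ::
  "'a::real_normed_vector set \<Rightarrow> 'a \<Rightarrow> ('a \<Rightarrow> real) \<Rightarrow> 'a \<Rightarrow> ereal" where
  "second_subderiv_indicator S z phi w =
     Liminf (inf (tw_filter w) (principal {(t, w'). z + t *\<^sub>R w' \<in> S}))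
            (\<lambda>(t, w'). ereal (- 2 * phi w' / t))"

definition local_minimizer_on :: "('a::real_normed_vector \<Rightarrow> real) \<Rightarrow> 'a set \<Rightarrow> 'a \<Rightarrow> bool" where
  "local_minimizer_on psi S z \<longleftrightarrow> z \<in> S \<and> (\<exists>\<eta>>0. \<forall>x\<in>S \<inter> cball z \<eta>. psi z \<le> psi x)"

end

theory Submission
  imports Defs
begin

text \<open>Everything rests on the identity
  \<open>second_quot psi z (t, w') = 2 (psi (z + t w') - psi z) / t\<^sup>2 - 2 d psi(z)(w') / t\<close>.
  At a local minimizer the first term is nonnegative at feasible points, so on them the curvature
  quotient \<open>2 d psi(z)(w') / t\<close> of \<open>S\<close> dominates \<open>- second_quot\<close>, whence the sum of the two second-order
  terms is \<open>\<ge> 0\<close> (for every \<open>w\<close>, in fact). Conversely, if quadratic growth fails there are feasible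
  points \<open>z + t\<^sub>k w\<^sub>k\<close> with \<open>t\<^sub>k \<rightarrow> 0\<close>, unit \<open>w\<^sub>k \<rightarrow> w\<close> and \<open>psi (z + t\<^sub>k w\<^sub>k) - psi z \<le> e\<^sub>k t\<^sub>k\<^sup>2\<close>,
  \<open>e\<^sub>k \<rightarrow> 0\<close>; then \<open>w\<close> is a nonzero tangent direction with \<open>d psi(z)(w) = 0\<close>, and along this sequence
  the same identity bounds the curvature term by \<open>- d\<^sup>2 psi(z)(w)\<close>, contradicting the strict
  second-order condition.\<close>

lemma tw_filter_ne_bot: "tw_filter (w::'a::real_normed_vector) \<noteq> bot"
  unfolding tw_filter_def by (simp add: prod_filter_eq_bot)

lemma filterlim_tw_filter_sequentially:
  assumes "\<And>k. t k > 0" "t \<longlonglongrightarrow> 0" "w \<longlonglongrightarrow> l"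
  shows "filterlim (\<lambda>k. (t k, w k)) (tw_filter l) sequentially"
  unfolding tw_filter_def
  by (intro filterlim_Pair tendsto_imp_filterlim_at_right assms) (simp add: assms)

lemma eventually_tw_filter_norm_less:
  assumes "\<eta> > 0"
  shows "eventually (\<lambda>x. norm (fst x *\<^sub>R snd x) < \<eta>) (tw_filter (w::'a::real_normed_vector))"
proof -
  have "filterlim fst (at_right (0::real)) (tw_filter w)"
    unfolding tw_filter_def by (rule filterlim_fst)
  then have "(fst \<longlongrightarrow> 0) (tw_filter w)"
    by (simp add: filterlim_at)
  moreover have "(snd \<longlongrightarrow> w) (tw_filter w)"
    unfolding tw_filter_def by (rule filterlim_snd)
  ultimately have "((\<lambda>x. fst x *\<^sub>R snd x) \<longlongrightarrow> 0 *\<^sub>R w) (tw_filter w)"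
    by (rule tendsto_scaleR)
  then have "((\<lambda>x. norm (fst x *\<^sub>R snd x)) \<longlongrightarrow> 0) (tw_filter w)"
    using tendsto_norm by fastforce
  then show ?thesis
    using assms by (rule order_tendstoD(2))
qed

lemma Liminf_antimono_filter: "F \<le> G \<Longrightarrow> Liminf G f \<le> Liminf F f"
  unfolding Liminf_def by (auto intro!: SUP_subset_mono simp: le_filter_def)

lemma semidifferentiable_at_subderiv:
  assumes "semidifferentiable_at psi z"
  shows "subderiv psi z w = ereal (real_of_ereal (subderiv psi z w))"
    and "((\<lambda>(t, w'). (psi (z + t *\<^sub>R w') - psi z) / t) \<longlongrightarrow> real_of_ereal (subderiv psi z w))
           (tw_filter w)"
proof -
  define q where "q = (\<lambda>(t, w'). (psi (z + t *\<^sub>R w') - psi z) / t)"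
  obtain L where L: "(q \<longlongrightarrow> L) (tw_filter w)"
    using assms unfolding semidifferentiable_at_def q_def by blast
  have "subderiv psi z w = Liminf (tw_filter w) (\<lambda>x. ereal (q x))"
    unfolding subderiv_def q_def by (simp add: case_prod_unfold)
  also have "\<dots> = ereal L"
    using tw_filter_ne_bot L by (intro lim_imp_Liminf tendsto_ereal) auto
  finally have L_eq: "subderiv psi z w = ereal L" .
  then show "subderiv psi z w = ereal (real_of_ereal (subderiv psi z w))"
    by simp
  show "((\<lambda>(t, w'). (psi (z + t *\<^sub>R w') - psi z) / t) \<longlongrightarrow> real_of_ereal (subderiv psi z w))
      (tw_filter w)"
    using L unfolding L_eq q_def by simp
qed

lemma tendsto_subderiv_sequentially:
  assumes "semidifferentiable_at psi z" "\<And>k. t k > 0" "t \<longlonglongrightarrow> 0" "w \<longlonglongrightarrow> l"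
  shows "(\<lambda>k. (psi (z + t k *\<^sub>R w k) - psi z) / t k) \<longlonglongrightarrow> real_of_ereal (subderiv psi z l)"
  using filterlim_compose[OF semidifferentiable_at_subderiv(2)[OF assms(1)]
      filterlim_tw_filter_sequentially[OF assms(2-4)]]
  by simp

lemma second_quot_eq:
  assumes "semidifferentiable_at psi z"
  shows "second_quot psi z (t, w') =
    ereal (2 * (psi (z + t *\<^sub>R w') - psi z) / t\<^sup>2 - 2 * real_of_ereal (subderiv psi z w') / t)"
proof -
  define D where "D v = real_of_ereal (subderiv psi z v)" for v
  have D: "subderiv psi z v = ereal (D v)" for v
    unfolding D_def by (rule semidifferentiable_at_subderiv(1)[OF assms])
  have "second_quot psi z (t, w') = ereal (2 * (psi (z + t *\<^sub>R w') - psi z) / t\<^sup>2 - 2 * D w' / t)"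
    by (cases "t = 0") (simp_all add: second_quot_def D field_simps power2_eq_square)
  then show ?thesis
    unfolding D_def .
qed

lemma twice_semidifferentiable_at_second_subderiv:
  assumes "twice_semidifferentiable_at psi z"
  shows "second_subderiv psi z w = ereal (real_of_ereal (second_subderiv psi z w))"
    and "(second_quot psi z \<longlongrightarrow> second_subderiv psi z w) (tw_filter w)"
proof -
  obtain L where L: "(second_quot psi z \<longlongrightarrow> ereal L) (tw_filter w)"
    using assms unfolding twice_semidifferentiable_at_def by blast
  have L_eq: "second_subderiv psi z w = ereal L"
    unfolding second_subderiv_def using tw_filter_ne_bot L by (intro lim_imp_Liminf) auto
  then show "second_subderiv psi z w = ereal (real_of_ereal (second_subderiv psi z w))"
    by simp
  show "(second_quot psi z \<longlongrightarrow> second_subderiv psi z w) (tw_filter w)"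
    unfolding L_eq by (rule L)
qed

lemma twice_semidifferentiable_at_imp_semidifferentiable_at:
  "twice_semidifferentiable_at psi z \<Longrightarrow> semidifferentiable_at psi z"
  unfolding twice_semidifferentiable_at_def by blast

lemma local_minimizer_eventually_tw_filter:
  assumes "local_minimizer_on psi S z"
  shows "eventually (\<lambda>x. z + fst x *\<^sub>R snd x \<in> S \<longrightarrow> psi z \<le> psi (z + fst x *\<^sub>R snd x))
           (tw_filter w)"
proof -
  obtain \<eta> where "\<eta> > 0" and min: "\<And>x. x \<in> S \<Longrightarrow> x \<in> cball z \<eta> \<Longrightarrow> psi z \<le> psi x"
    using assms unfolding local_minimizer_on_def by blast
  show ?thesis
    using eventually_tw_filter_norm_less[OF \<open>\<eta> > 0\<close>]
    by eventually_elim (auto simp: dist_norm intro: min)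
qed

lemma local_minimizer_subderiv_nonneg:
  assumes sd: "semidifferentiable_at psi z" and min: "local_minimizer_on psi S z"
    and w: "w \<in> tangent_cone S z"
  shows "0 \<le> subderiv psi z w"
proof -
  obtain t wk where t: "\<And>k. t k > 0" "t \<longlonglongrightarrow> 0" "wk \<longlonglongrightarrow> w" "\<And>k. z + t k *\<^sub>R wk k \<in> S"
    using w unfolding tangent_cone_def by blast
  have "eventually (\<lambda>k. psi z \<le> psi (z + t k *\<^sub>R wk k)) sequentially"
    using eventually_compose_filterlim[OF local_minimizer_eventually_tw_filter[OF min]
        filterlim_tw_filter_sequentially[OF t(1-3)]]
    by (simp add: t(4))
  then have "eventually (\<lambda>k. 0 \<le> (psi (z + t k *\<^sub>R wk k) - psi z) / t k) sequentially"
    by eventually_elim (simp add: t(1) less_imp_le)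
  with tendsto_subderiv_sequentially[OF sd t(1-3)] have "0 \<le> real_of_ereal (subderiv psi z w)"
    by (rule tendsto_lowerbound) simp
  then show ?thesis
    by (subst semidifferentiable_at_subderiv(1)[OF sd]) simp
qed

lemma local_minimizer_second_order_necessary:
  assumes twice: "twice_semidifferentiable_at psi z" and min: "local_minimizer_on psi S z"
  shows "0 \<le> second_subderiv psi z w
           + second_subderiv_indicator S z (\<lambda>v. - real_of_ereal (subderiv psi z v)) w"
proof -
  note sd = twice_semidifferentiable_at_imp_semidifferentiable_at[OF twice]
  define F where "F = inf (tw_filter w) (principal {(t, w'). z + t *\<^sub>R w' \<in> S})"
  define g where "g = (\<lambda>(t, w'). ereal (2 * real_of_ereal (subderiv psi z w') / t))"
  have "eventually (\<lambda>x. - second_quot psi z x \<le> g x) F"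
  proof -
    have "eventually (\<lambda>x. x \<in> {(t, w'). z + t *\<^sub>R w' \<in> S} \<longrightarrow> - second_quot psi z x \<le> g x)
        (tw_filter w)"
      using local_minimizer_eventually_tw_filter[OF min]
      by eventually_elim (auto simp: g_def second_quot_eq[OF sd])
    then show ?thesis
      unfolding F_def eventually_inf_principal .
  qed
  then have "Liminf F (\<lambda>x. - second_quot psi z x) \<le> Liminf F g"
    by (rule Liminf_mono)
  moreover have "- second_subderiv psi z w \<le> Liminf F (\<lambda>x. - second_quot psi z x)"
  proof (cases "F = bot")
    case False
    have "((\<lambda>x. - second_quot psi z x) \<longlongrightarrow> - second_subderiv psi z w) F"
      unfolding F_def
      by (intro tendsto_uminus_ereal tendsto_mono[OF inf_le1]
          twice_semidifferentiable_at_second_subderiv(2)[OF twice])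
    with False show ?thesis
      by (simp add: lim_imp_Liminf)
  qed simp
  moreover have "second_subderiv_indicator S z (\<lambda>v. - real_of_ereal (subderiv psi z v)) w = Liminf F g"
    unfolding second_subderiv_indicator_def F_def g_def by simp
  ultimately have "- second_subderiv psi z w
      \<le> second_subderiv_indicator S z (\<lambda>v. - real_of_ereal (subderiv psi z v)) w"
    by order
  then show ?thesis
    by (cases "second_subderiv psi z w";
        cases "second_subderiv_indicator S z (\<lambda>v. - real_of_ereal (subderiv psi z v)) w") auto
qed

lemma second_subderiv_indicator_le_Liminf_sequentially:
  assumes "\<And>k. t k > 0" "t \<longlonglongrightarrow> 0" "w \<longlonglongrightarrow> l" "\<And>k. z + t k *\<^sub>R w k \<in> S"
  shows "second_subderiv_indicator S z phi l \<le> Liminf sequentially (\<lambda>k. ereal (- 2 * phi (w k) / t k))"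
proof -
  define g where "g = (\<lambda>(t, w'). ereal (- 2 * phi w' / t))"
  have "filterlim (\<lambda>k. (t k, w k)) (inf (tw_filter l) (principal {(t, w'). z + t *\<^sub>R w' \<in> S}))
      sequentially"
    using filterlim_tw_filter_sequentially[OF assms(1-3)] assms(4)
    by (simp add: filterlim_inf filterlim_principal)
  then have "second_subderiv_indicator S z phi l \<le> Liminf (filtermap (\<lambda>k. (t k, w k)) sequentially) g"
    unfolding second_subderiv_indicator_def g_def filterlim_def by (rule Liminf_antimono_filter)
  also have "\<dots> \<le> Liminf sequentially (\<lambda>k. g (t k, w k))"
    by (rule Liminf_filtermap_le)
  finally show ?thesis
    unfolding g_def by simp
qed

lemma quadratic_growth_failure_sequence:
  fixes f :: "'a::{real_normed_vector,perfect_space,heine_borel} \<Rightarrow> real"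
  assumes fail: "\<not> (\<exists>\<epsilon>>0. \<exists>\<eta>>0. \<forall>z\<in>S \<inter> cball zbar \<eta>. f z \<ge> f zbar + \<epsilon> * (norm (z - zbar))\<^sup>2)"
  obtains t w l e where "\<And>k. t k > 0" "t \<longlonglongrightarrow> 0" "w \<longlonglongrightarrow> l" "\<And>k. zbar + t k *\<^sub>R w k \<in> S"
    "norm l = 1" "e \<longlonglongrightarrow> 0" "\<And>k. f (zbar + t k *\<^sub>R w k) - f zbar \<le> e k * (t k)\<^sup>2"
proof -
  define e where "e k = inverse (real (Suc k))" for k
  have "\<exists>z\<in>S. z \<noteq> zbar \<and> norm (z - zbar) \<le> e k \<and> f z - f zbar \<le> e k * (norm (z - zbar))\<^sup>2" for k
  proof -
    have "e k > 0"
      unfolding e_def by simp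
    with fail have "\<not> (\<forall>z\<in>S \<inter> cball zbar (e k). f z \<ge> f zbar + e k * (norm (z - zbar))\<^sup>2)"
      by blast
    then obtain z where "z \<in> S" "z \<in> cball zbar (e k)" "f z < f zbar + e k * (norm (z - zbar))\<^sup>2"
      by (auto simp: not_le)
    then show ?thesis
      by (intro bexI[of _ z]) (auto simp: dist_norm norm_minus_commute)
  qed
  then obtain zs where zs: "\<And>k. zs k \<in> S" "\<And>k. zs k \<noteq> zbar" "\<And>k. norm (zs k - zbar) \<le> e k"
    "\<And>k. f (zs k) - f zbar \<le> e k * (norm (zs k - zbar))\<^sup>2"
    by metis
  define t where "t k = norm (zs k - zbar)" for k
  define u where "u k = inverse (t k) *\<^sub>R (zs k - zbar)" for k
  have t_pos: "t k > 0" for k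
    using zs(2) unfolding t_def by simp
  have zs_eq: "zs k = zbar + t k *\<^sub>R u k" for k
    using t_pos[of k] unfolding u_def by simp
  have e0: "e \<longlonglongrightarrow> 0"
    unfolding e_def by (rule LIMSEQ_inverse_real_of_nat)
  have t0: "t \<longlonglongrightarrow> 0"
    using zs(3) t_pos by (intro tendsto_sandwich[OF _ _ tendsto_const e0]) (auto simp: t_def less_imp_le)
  have "seq_compact (sphere (0::'a) 1)"
    by (rule compact_imp_seq_compact[OF compact_sphere])
  moreover have "\<forall>k. u k \<in> sphere 0 1"
    using t_pos unfolding u_def t_def by simp
  ultimately obtain l r where l: "l \<in> sphere 0 1" and r: "strict_mono r" and ul: "(u \<circ> r) \<longlonglongrightarrow> l"
    by (rule seq_compactE)
  have f_le: "f (zbar + t k *\<^sub>R u k) - f zbar \<le> e k * (t k)\<^sup>2" for k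
    by (subst zs_eq[symmetric]) (simp add: t_def zs(4))
  show ?thesis
  proof (rule that[of "t \<circ> r" "u \<circ> r" l "e \<circ> r"])
    show "(t \<circ> r) \<longlonglongrightarrow> 0" "(e \<circ> r) \<longlonglongrightarrow> 0"
      using LIMSEQ_subseq_LIMSEQ[OF t0 r] LIMSEQ_subseq_LIMSEQ[OF e0 r] .
    show "(u \<circ> r) \<longlonglongrightarrow> l" "norm l = 1"
      using ul l by simp_all
    show "(t \<circ> r) k > 0" for k
      using t_pos by simp
    show "zbar + (t \<circ> r) k *\<^sub>R (u \<circ> r) k \<in> S" for k
      using zs(1)[of "r k"] zs_eq[of "r k"] by simp
    show "f (zbar + (t \<circ> r) k *\<^sub>R (u \<circ> r) k) - f zbar \<le> (e \<circ> r) k * ((t \<circ> r) k)\<^sup>2" for k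
      using f_le by simp
  qed
qed

lemma subderiv_le_zero_sequentially:
  assumes sd: "semidifferentiable_at psi z"
    and t: "\<And>k. t k > 0" "t \<longlonglongrightarrow> 0" "w \<longlonglongrightarrow> l"
    and e: "e \<longlonglongrightarrow> 0" "\<And>k. psi (z + t k *\<^sub>R w k) - psi z \<le> e k * (t k)\<^sup>2"
  shows "subderiv psi z l \<le> 0"
proof -
  have "(psi (z + t k *\<^sub>R w k) - psi z) / t k \<le> e k * t k" for k
    using e(2)[of k] t(1)[of k] by (simp add: divide_le_eq power2_eq_square mult.assoc)
  moreover have "(\<lambda>k. e k * t k) \<longlonglongrightarrow> 0"
    using tendsto_mult[OF e(1) t(2)] by simp
  ultimately have "real_of_ereal (subderiv psi z l) \<le> 0"
    by (intro tendsto_le[OF _ _ tendsto_subderiv_sequentially[OF sd t]]) auto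
  then show ?thesis
    by (subst semidifferentiable_at_subderiv(1)[OF sd]) simp
qed

lemma second_order_sum_le_zero_sequentially:
  assumes twice: "twice_semidifferentiable_at psi z"
    and t: "\<And>k. t k > 0" "t \<longlonglongrightarrow> 0" "w \<longlonglongrightarrow> l" "\<And>k. z + t k *\<^sub>R w k \<in> S"
    and e: "e \<longlonglongrightarrow> 0" "\<And>k. psi (z + t k *\<^sub>R w k) - psi z \<le> e k * (t k)\<^sup>2"
  shows "second_subderiv psi z l
           + second_subderiv_indicator S z (\<lambda>v. - real_of_ereal (subderiv psi z v)) l \<le> 0"
proof -
  note sd = twice_semidifferentiable_at_imp_semidifferentiable_at[OF twice]
  define d where "d v = real_of_ereal (subderiv psi z v)" for v
  define q where "q = (\<lambda>k. 2 * (psi (z + t k *\<^sub>R w k) - psi z) / (t k)\<^sup>2 - 2 * d (w k) / t k)"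
  obtain L where L: "second_subderiv psi z l = ereal L"
    using twice_semidifferentiable_at_second_subderiv(1)[OF twice] by blast
  have "(\<lambda>k. second_quot psi z (t k, w k)) \<longlonglongrightarrow> ereal L"
    using filterlim_compose[OF twice_semidifferentiable_at_second_subderiv(2)[OF twice]
        filterlim_tw_filter_sequentially[OF t(1-3)]]
    unfolding L by simp
  then have qL: "q \<longlonglongrightarrow> L"
    by (simp add: q_def d_def second_quot_eq[OF sd])
  \<comment> \<open>\<open>2 d(w\<^sub>k)/t\<^sub>k = 2 (psi (z + t\<^sub>k w\<^sub>k) - psi z)/t\<^sub>k\<^sup>2 - q\<^sub>k \<le> 2 e\<^sub>k - q\<^sub>k \<longlonglongrightarrow> -L\<close>\<close>
  have "second_subderiv_indicator S z (\<lambda>v. - d v) l \<le> Liminf sequentially (\<lambda>k. ereal (2 * d (w k) / t k))"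
    using second_subderiv_indicator_le_Liminf_sequentially[OF t, of "\<lambda>v. - d v"] by simp
  also have "\<dots> \<le> Liminf sequentially (\<lambda>k. ereal (2 * e k - q k))"
  proof (intro Liminf_mono always_eventually allI)
    fix k
    have "2 * (psi (z + t k *\<^sub>R w k) - psi z) / (t k)\<^sup>2 \<le> 2 * e k"
      using e(2)[of k] t(1)[of k] by (simp add: pos_divide_le_eq)
    then show "ereal (2 * d (w k) / t k) \<le> ereal (2 * e k - q k)"
      unfolding q_def by simp
  qed
  also have "\<dots> = ereal (- L)"
    using tendsto_diff[OF tendsto_mult_left[OF e(1), of 2] qL]
    by (intro lim_imp_Liminf) auto
  finally show ?thesis
    unfolding L d_def
    by (cases "second_subderiv_indicator S z (\<lambda>v. - real_of_ereal (subderiv psi z v)) l") auto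
qed

lemma second_order_sufficient_quadratic_growth:
  fixes psi :: "'a::{real_normed_vector,perfect_space,heine_borel} \<Rightarrow> real"
  assumes twice: "twice_semidifferentiable_at psi z"
    and first: "\<forall>w\<in>tangent_cone S z. subderiv psi z w \<ge> 0"
    and second: "\<forall>w\<in>tangent_cone S z - {0}. subderiv psi z w = 0 \<longrightarrow>
       second_subderiv psi z w + second_subderiv_indicator S z (\<lambda>v. - real_of_ereal (subderiv psi z v)) w > 0"
  shows "\<exists>\<epsilon>>0. \<exists>\<eta>>0. \<forall>x\<in>S \<inter> cball z \<eta>. psi x \<ge> psi z + \<epsilon> * (norm (x - z))\<^sup>2"
proof (rule ccontr)
  assume "\<not> ?thesis"
  then obtain t w l e where t: "\<And>k. t k > 0" "t \<longlonglongrightarrow> 0" "w \<longlonglongrightarrow> l" "\<And>k. z + t k *\<^sub>R w k \<in> S"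
    and l: "norm l = 1" and e: "e \<longlonglongrightarrow> 0" "\<And>k. psi (z + t k *\<^sub>R w k) - psi z \<le> e k * (t k)\<^sup>2"
    by (rule quadratic_growth_failure_sequence) blast
  note sd = twice_semidifferentiable_at_imp_semidifferentiable_at[OF twice]
  have "l \<in> tangent_cone S z - {0}"
    using t l unfolding tangent_cone_def by auto
  moreover have "subderiv psi z l = 0"
    using first calculation subderiv_le_zero_sequentially[OF sd t(1-3) e] by (auto intro: antisym)
  ultimately have "second_subderiv psi z l
      + second_subderiv_indicator S z (\<lambda>v. - real_of_ereal (subderiv psi z v)) l > 0"
    using second by blast
  with second_order_sum_le_zero_sequentially[OF twice t e] show False
    by simp
qed

lemma quadratic_growth_imp_local_minimizer:
  assumes "z \<in> S" "\<epsilon> > 0" "\<eta> > 0" "\<forall>x\<in>S \<inter> cball z \<eta>. psi x \<ge> psi z + \<epsilon> * (norm (x - z))\<^sup>2"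
  shows "local_minimizer_on psi S z"
  unfolding local_minimizer_on_def
  using assms by (smt (verit) mult_nonneg_nonneg zero_le_power2)

theorem mainTheorem2:
  fixes psi :: "'a::euclidean_space \<Rightarrow> real" and S :: "'a set" and zbar :: 'a
  assumes "S \<noteq> {}" and "closed S" and "zbar \<in> S"
    and "twice_semidifferentiable_at psi zbar"
  shows "(local_minimizer_on psi S zbar \<longrightarrow>
            (\<forall>w\<in>tangent_cone S zbar. subderiv psi zbar w \<ge> 0) \<and>
            (\<forall>w\<in>tangent_cone S zbar. subderiv psi zbar w = 0 \<longrightarrow>
               second_subderiv psi zbar w
               + second_subderiv_indicator S zbar (\<lambda>v. - real_of_ereal (subderiv psi zbar v)) w \<ge> 0))
       \<and> (((\<forall>w\<in>tangent_cone S zbar. subderiv psi zbar w \<ge> 0) \<and>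
            (\<forall>w\<in>tangent_cone S zbar - {0}. subderiv psi zbar w = 0 \<longrightarrow>
               second_subderiv psi zbar w
               + second_subderiv_indicator S zbar (\<lambda>v. - real_of_ereal (subderiv psi zbar v)) w > 0))
          \<longrightarrow> (\<exists>\<epsilon>>0. \<exists>\<eta>>0. \<forall>z\<in>S \<inter> cball zbar \<eta>. psi z \<ge> psi zbar + \<epsilon> * (norm (z - zbar))\<^sup>2)
              \<and> local_minimizer_on psi S zbar)"
proof -
  note sd = twice_semidifferentiable_at_imp_semidifferentiable_at[OF assms(4)]
  show ?thesis
  proof (intro conjI impI ballI)
    show "0 \<le> subderiv psi zbar w"
      if "local_minimizer_on psi S zbar" "w \<in> tangent_cone S zbar" for w
      using local_minimizer_subderiv_nonneg[OF sd that] .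
    show "0 \<le> second_subderiv psi zbar w
        + second_subderiv_indicator S zbar (\<lambda>v. - real_of_ereal (subderiv psi zbar v)) w"
      if "local_minimizer_on psi S zbar" for w
      using local_minimizer_second_order_necessary[OF assms(4) that] .
  next
    assume "(\<forall>w\<in>tangent_cone S zbar. subderiv psi zbar w \<ge> 0) \<and>
      (\<forall>w\<in>tangent_cone S zbar - {0}. subderiv psi zbar w = 0 \<longrightarrow>
         second_subderiv psi zbar w
         + second_subderiv_indicator S zbar (\<lambda>v. - real_of_ereal (subderiv psi zbar v)) w > 0)"
    then show "\<exists>\<epsilon>>0. \<exists>\<eta>>0. \<forall>z\<in>S \<inter> cball zbar \<eta>. psi z \<ge> psi zbar + \<epsilon> * (norm (z - zbar))\<^sup>2"
      using second_order_sufficient_quadratic_growth[OF assms(4)] by blast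
    then show "local_minimizer_on psi S zbar"
      using quadratic_growth_imp_local_minimizer[OF assms(3)] by blast
  qed
qed

end
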